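(* Let $n\ge1$, $\mathbf{A}=\{a_1,\dots,a_n\}$ and $\mathbf{S}_1^n=\{XX : X\in\mathbf{A}^*,\ X\neq\emptyset\}$. Let $X_1=a_1$, $X_i=X_{i-1}a_iX_{i-1}$ for $2\le i\le n$. Then every minimal crucial word with respect to $\mathbf{S}_1^n$ is obtained from $X_n$ by a permutation of the letters of $\mathbf{A}$; i.e. $X_n$ is the unique minimal crucial word up to renaming of letters.
   Context: A word over $\mathbf{A}$ is a finite sequence of letters; $\mathbf{A}^*$ is the set of all words. A subword is a block of consecutive letters. For $\mathbf{S}\subseteq\mathbf{A}^*$, a word is free from $\mathbf{S}$ if none of its subwords belongs to $\mathbf{S}$. A word $X$ free from $\mathbf{S}$ is crucial with respect to $\mathbf{S}$ if for every letter $a\in\mathbf{A}$ the word $Xa$ contains a subword belonging to $\mathbf{S}$. A minimal crucial word is a crucial word of smallest possible length. *)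

theory Defs
  imports Main
begin

definition subword :: "'a list \<Rightarrow> 'a list \<Rightarrow> bool" where
  "subword Y W \<longleftrightarrow> (\<exists>u v. W = u @ Y @ v)"

definition free_from :: "'a set \<Rightarrow> 'a list set \<Rightarrow> 'a list \<Rightarrow> bool" where
  "free_from A S X \<longleftrightarrow> set X \<subseteq> A \<and> (\<forall>Y. subword Y X \<longrightarrow> Y \<notin> S)"

definition crucial :: "'a set \<Rightarrow> 'a list set \<Rightarrow> 'a list \<Rightarrow> bool" where
  "crucial A S X \<longleftrightarrow> free_from A S X \<and> (\<forall>a\<in>A. \<exists>Y. subword Y (X @ [a]) \<and> Y \<in> S)"

definition minimal_crucial :: "'a set \<Rightarrow> 'a list set \<Rightarrow> 'a list \<Rightarrow> bool" where
  "minimal_crucial A S X \<longleftrightarrow> crucial A S X \<and> (\<forall>Y. crucial A S Y \<longrightarrow> length X \<le> length Y)"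

definition squares :: "'a set \<Rightarrow> 'a list set" where
  "squares A = {X @ X | X. X \<noteq> [] \<and> set X \<subseteq> A}"

fun zimin :: "(nat \<Rightarrow> 'a) \<Rightarrow> nat \<Rightarrow> 'a list" where
  "zimin a 0 = []"
| "zimin a (Suc i) = zimin a i @ [a (Suc i)] @ zimin a i"

end

theory Submission
  imports Defs "HOL-Library.Sublist"
begin

(* A crucial word W for squares is square-free, so the square created by appending a letter b
   is a suffix of W b; hence W ends with Z b Z for some Z. Fix such a Z for every letter. The
   lengths |Z| are pairwise distinct (b sits at position |W| - |Z| - 1), and square-freeness
   forces each one to exceed twice the previous one. With n letters the largest length is then
   at least 2^(n-1) - 1, so |W| >= 2^n - 1. Since the Zimin word is crucial of length 2^n - 1,
   a minimal crucial word meets this bound, the lengths are exactly 2^k - 1 for k < n, and the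
   nested squares Z b Z rebuild W as the Zimin word over the letters in that order. *)

lemma subword_eq_sublist: "subword = sublist"
  by (simp add: fun_eq_iff subword_def sublist_def)

definition square_free :: "'a list \<Rightarrow> bool" where
  "square_free W \<longleftrightarrow> (\<forall>Y. Y \<noteq> [] \<longrightarrow> \<not> sublist (Y @ Y) W)"

lemma free_from_squares_iff: "free_from A (squares A) W \<longleftrightarrow> set W \<subseteq> A \<and> square_free W"
proof
  assume free: "free_from A (squares A) W"
  have "\<not> sublist (Y @ Y) W" if "Y \<noteq> []" for Y
  proof
    assume "sublist (Y @ Y) W"
    moreover from this have "set Y \<subseteq> A"
      using free set_mono_sublist unfolding free_from_def by fastforce
    ultimately show False
      using free \<open>Y \<noteq> []\<close> unfolding free_from_def squares_def subword_eq_sublist by blast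
  qed
  then show "set W \<subseteq> A \<and> square_free W"
    using free unfolding free_from_def square_free_def by blast
qed (auto simp: free_from_def square_free_def squares_def subword_eq_sublist)

lemma sublist_append_Cons_notin:
  assumes "sublist S (L @ c # R)" "c \<notin> set S"
  shows "sublist S L \<or> sublist S R"
  using assms by (auto simp: sublist_append sublist_Cons_right prefix_Cons)

lemma square_free_append_Cons_self:
  assumes "square_free L" "c \<notin> set L"
  shows "square_free (L @ c # L)"
  unfolding square_free_def
proof (intro allI impI notI)
  fix Y assume "Y \<noteq> []" and sq: "sublist (Y @ Y) (L @ c # L)"
  show False
  proof (cases "c \<in> set Y")
    case True
    obtain u v where "L @ c # L = u @ (Y @ Y) @ v"
      using sq unfolding sublist_def by blast
    then have "count_list (L @ c # L) c \<ge> count_list (Y @ Y) c" by simp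
    moreover have "count_list Y c \<ge> 1"
      using True count_list_0_iff[of Y c] by linarith
    ultimately show False using assms(2) by simp
  next
    case False
    then show False
      using sublist_append_Cons_notin[OF sq] assms(1) \<open>Y \<noteq> []\<close> unfolding square_free_def by auto
  qed
qed

lemma length_zimin: "length (zimin a k) = 2 ^ k - 1"
proof (induction k)
  case (Suc k)
  have "(1::nat) \<le> 2 ^ k" by simp
  with Suc show ?case by simp
qed simp

lemma set_zimin: "set (zimin a k) = a ` {1..k}"
proof (induction k)
  case (Suc k)
  have "{1..Suc k} = insert (Suc k) {1..k}" by auto
  with Suc show ?case by auto
qed simp

lemma map_zimin: "map f (zimin a k) = zimin (f \<circ> a) k"
  by (induction k) auto

lemma zimin_cong: "(\<And>i. i \<in> {1..k} \<Longrightarrow> a i = b i) \<Longrightarrow> zimin a k = zimin b k"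
  by (induction k) auto

lemma suffix_zimin: "i \<le> k \<Longrightarrow> suffix (zimin a i) (zimin a k)"
proof (induction k)
  case (Suc k)
  show ?case
  proof (cases "i = Suc k")
    case False
    with Suc have "suffix (zimin a i) (zimin a k)" by simp
    then show ?thesis by (simp add: suffix_appendI suffix_ConsI)
  qed simp
qed simp

lemma square_free_zimin: "inj_on a {1..k} \<Longrightarrow> square_free (zimin a k)"
proof (induction k)
  case 0
  show ?case by (simp add: square_free_def)
next
  case (Suc k)
  have "inj_on a {1..k}" using Suc.prems by (rule inj_on_subset) auto
  with Suc.IH have "square_free (zimin a k)" by blast
  moreover have "a (Suc k) \<notin> a ` {1..k}"
    using Suc.prems by (subst inj_on_image_mem_iff) auto
  ultimately show ?case by (simp add: square_free_append_Cons_self set_zimin)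
qed

lemma crucial_zimin:
  assumes "inj_on a {1..n}"
  shows "crucial (a ` {1..n}) (squares (a ` {1..n})) (zimin a n)"
  unfolding crucial_def free_from_squares_iff
proof (intro conjI ballI)
  show "set (zimin a n) \<subseteq> a ` {1..n}" "square_free (zimin a n)"
    by (simp_all add: set_zimin square_free_zimin[OF assms])
next
  fix b assume "b \<in> a ` {1..n}"
  then obtain j where j: "j < n" "b = a (Suc j)"
    by (auto simp: Suc_le_eq gr0_conv_Suc)
  define X where "X = zimin a j @ [b]"
  have "suffix (X @ X) (zimin a n @ [b])"
    using suffix_zimin[of "Suc j" n a] j by (simp add: X_def)
  moreover have "set X \<subseteq> a ` {1..n}"
    using j by (auto simp: X_def set_zimin)
  ultimately show "\<exists>Y. subword Y (zimin a n @ [b]) \<and> Y \<in> squares (a ` {1..n})"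
    unfolding subword_eq_sublist squares_def X_def by blast
qed

definition doubling :: "nat set \<Rightarrow> bool" where
  "doubling S \<longleftrightarrow> (\<forall>x\<in>S. \<forall>y\<in>S. x < y \<longrightarrow> 2 * x + 1 \<le> y)"

lemma doubling_Max_remove:
  assumes "finite S" "doubling S" "1 < card S"
  shows "2 * Max (S - {Max S}) + 1 \<le> Max S"
proof -
  let ?M' = "Max (S - {Max S})"
  have M: "Max S \<in> S" using assms(1,3) by (intro Max_in) auto
  with assms(1,3) have "card (S - {Max S}) \<noteq> 0" by simp
  then have "S - {Max S} \<noteq> {}" by (intro notI) simp
  then have M': "?M' \<in> S - {Max S}" using assms(1) by (intro Max_in) auto
  then have "?M' < Max S" using assms(1) by (simp add: order.not_eq_order_implies_strict)
  with M M' assms(2) show ?thesis unfolding doubling_def by blast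
qed

lemma doubling_Max_ge:
  assumes "finite S" "card S = Suc m" "doubling S"
  shows "2 ^ m - 1 \<le> Max S"
  using assms
proof (induction m arbitrary: S)
  case (Suc m)
  let ?S' = "S - {Max S}"
  have "S \<noteq> {}" using Suc.prems(2) by auto
  then have "card ?S' = Suc m" using Suc.prems(1,2) by simp
  moreover have "doubling ?S'" using Suc.prems(3) unfolding doubling_def by blast
  ultimately have "2 ^ m - 1 \<le> Max ?S'" using Suc.IH Suc.prems(1) by blast
  moreover have "2 * Max ?S' + 1 \<le> Max S"
    using Suc.prems by (intro doubling_Max_remove) auto
  ultimately show ?case by simp
qed simp

lemma doubling_eq_image_Mersenne:
  assumes "finite S" "card S = Suc m" "doubling S" "Max S \<le> 2 ^ m - 1"
  shows "S = (\<lambda>k. 2 ^ k - 1) ` {..m}"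
  using assms
proof (induction m arbitrary: S)
  case 0
  then obtain x where "S = {x}" by (auto simp: card_Suc_eq)
  with "0.prems" show ?case by simp
next
  case (Suc m)
  let ?S' = "S - {Max S}"
  have "S \<noteq> {}" using Suc.prems(2) by auto
  then have S: "S = insert (Max S) ?S'" using Suc.prems(1) by (simp add: insert_absorb)
  have "card ?S' = Suc m" using \<open>S \<noteq> {}\<close> Suc.prems(1,2) by simp
  moreover have "doubling ?S'" using Suc.prems(3) unfolding doubling_def by blast
  ultimately have "2 ^ m - 1 \<le> Max ?S'" using doubling_Max_ge Suc.prems(1) by blast
  moreover have "2 * Max ?S' + 1 \<le> Max S"
    using Suc.prems by (intro doubling_Max_remove) auto
  moreover have "(1::nat) \<le> 2 ^ m" by simp
  ultimately have "Max ?S' \<le> 2 ^ m - 1" "Max S = 2 ^ Suc m - 1"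
    using Suc.prems(4) by auto
  with Suc.IH Suc.prems(1) \<open>card ?S' = Suc m\<close> \<open>doubling ?S'\<close>
  have "?S' = (\<lambda>k. 2 ^ k - 1) ` {..m}" by blast
  with S \<open>Max S = 2 ^ Suc m - 1\<close> show ?case by (simp only: atMost_Suc image_insert)
qed

definition ends_with_square :: "'a list \<Rightarrow> 'a \<Rightarrow> nat \<Rightarrow> bool" where
  "ends_with_square W b m \<longleftrightarrow> (\<exists>Z. length Z = m \<and> suffix (Z @ b # Z) W)"

lemma crucial_squares_ends_with_square:
  assumes "crucial A (squares A) W" "b \<in> A"
  shows "\<exists>m. ends_with_square W b m"
proof -
  have "square_free W"
    using assms(1) unfolding crucial_def free_from_squares_iff by blast
  obtain X where X: "X \<noteq> []" "sublist (X @ X) (W @ [b])"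
    using assms unfolding crucial_def squares_def subword_eq_sublist by blast
  then have "suffix (X @ X) (W @ [b])"
    using \<open>square_free W\<close> unfolding square_free_def sublist_snoc by blast
  moreover obtain Z x where "X = Z @ [x]"
    using X(1) by (cases X rule: rev_cases) auto
  ultimately have "suffix (Z @ b # Z) W" by auto
  then show ?thesis unfolding ends_with_square_def by blast
qed

lemma ends_with_square_nth:
  assumes "ends_with_square W b m"
  shows "W ! (length W - Suc m) = b"
proof -
  obtain Z u where "length Z = m" "W = u @ Z @ b # Z"
    using assms unfolding ends_with_square_def suffix_def by blast
  then show ?thesis by (simp add: nth_append)
qed

lemma ends_with_square_length:
  "ends_with_square W b m \<Longrightarrow> 2 * m + 1 \<le> length W"
  unfolding ends_with_square_def by (auto dest: suffix_length_le)

lemma square_free_ends_with_square_gap: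
  assumes "square_free W" "ends_with_square W b m" "ends_with_square W d m'" "m < m'"
  shows "2 * m + 1 \<le> m'"
proof (rule ccontr)
  \<comment> \<open>Then d T is a suffix of Z b Z; writing Z = K d R gives T = R b K d R,
    so T d T contains the square (d R)(d R).\<close>
  assume "\<not> 2 * m + 1 \<le> m'"
  obtain Z T where Z: "length Z = m" "suffix (Z @ b # Z) W"
    and T: "length T = m'" "suffix (T @ d # T) W"
    using assms(2,3) unfolding ends_with_square_def by blast
  have "suffix (d # T) W" using T(2) by (rule suffix_appendD)
  then have "suffix (d # T) (Z @ b # Z)"
    using Z(2) by (rule suffix_length_suffix) (use Z(1) T(1) \<open>\<not> 2 * m + 1 \<le> m'\<close> in simp)
  then obtain K where K: "Z @ b # Z = K @ d # T" unfolding suffix_def by blast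
  then have "length (Z @ b # Z) = length (K @ d # T)" by simp
  then have "length K < length Z" using Z(1) T(1) assms(4) by simp
  with K obtain U where "Z = K @ U" "U @ b # Z = d # T"
    by (auto simp: append_eq_append_conv2)
  with \<open>length K < length Z\<close> obtain R where R: "Z = K @ d # R" "T = R @ b # Z"
    by (cases U) auto
  have "sublist ((d # R) @ (d # R)) (T @ d # T)"
    unfolding sublist_def by (rule exI[of _ "R @ b # K"], rule exI[of _ "b # Z"]) (simp add: R)
  also have "sublist (T @ d # T) W" using T(2) by (rule suffix_imp_sublist)
  finally show False using assms(1) unfolding square_free_def by blast
qed

lemma crucial_squares_square_lengths:
  assumes "crucial A (squares A) W"
  obtains s where "inj_on s A" "doubling (s ` A)" "\<And>b. b \<in> A \<Longrightarrow> ends_with_square W b (s b)"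
proof
  define s where "s b = (SOME m. ends_with_square W b m)" for b
  show s: "ends_with_square W b (s b)" if "b \<in> A" for b
    unfolding s_def using crucial_squares_ends_with_square[OF assms that] by (rule someI_ex)
  show "inj_on s A"
  proof (rule inj_onI)
    fix b d assume "b \<in> A" "d \<in> A" "s b = s d"
    have "b = W ! (length W - Suc (s b))"
      using ends_with_square_nth[OF s[OF \<open>b \<in> A\<close>]] by simp
    also have "\<dots> = d"
      using ends_with_square_nth[OF s[OF \<open>d \<in> A\<close>]] \<open>s b = s d\<close> by simp
    finally show "b = d" .
  qed
  have "square_free W"
    using assms unfolding crucial_def free_from_squares_iff by blast
  show "doubling (s ` A)"
    unfolding doubling_def
  proof (intro ballI impI)
    fix x y assume "x \<in> s ` A" "y \<in> s ` A" "x < y"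
    then obtain b d where "b \<in> A" "d \<in> A" "x = s b" "y = s d" by blast
    then have "ends_with_square W b x" "ends_with_square W d y" using s by simp_all
    then show "2 * x + 1 \<le> y"
      using \<open>x < y\<close> by (rule square_free_ends_with_square_gap[OF \<open>square_free W\<close>])
  qed
qed

lemma suffix_zimin_if_ends_with_squares:
  assumes "\<And>j. j < k \<Longrightarrow> ends_with_square W (\<sigma> (Suc j)) (2 ^ j - 1)"
  shows "suffix (zimin \<sigma> k) W"
  using assms
proof (induction k)
  case (Suc k)
  then have IH: "suffix (zimin \<sigma> k) W" by simp
  obtain Z where Z: "length Z = 2 ^ k - 1" "suffix (Z @ \<sigma> (Suc k) # Z) W"
    using Suc.prems[of k] unfolding ends_with_square_def by blast
  have "suffix Z W" using suffix_appendD[OF Z(2)] by (rule suffix_ConsD)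
  have "Z = zimin \<sigma> k"
  proof (rule suffix_order.antisym)
    show "suffix Z (zimin \<sigma> k)"
      using \<open>suffix Z W\<close> IH by (rule suffix_length_suffix) (simp add: Z(1) length_zimin)
    show "suffix (zimin \<sigma> k) Z"
      using IH \<open>suffix Z W\<close> by (rule suffix_length_suffix) (simp add: Z(1) length_zimin)
  qed
  with Z(2) show ?case by simp
qed simp

lemma crucial_squares_square_lengths_Mersenne:
  assumes "finite A" "card A = Suc m" "crucial A (squares A) W" "length W \<le> 2 ^ Suc m - 1"
  obtains s where "inj_on s A" "s ` A = (\<lambda>k. 2 ^ k - 1) ` {..m}"
    "\<And>b. b \<in> A \<Longrightarrow> ends_with_square W b (s b)"
proof -
  obtain s where s_inj: "inj_on s A" and s_doubling: "doubling (s ` A)"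
    and s: "\<And>b. b \<in> A \<Longrightarrow> ends_with_square W b (s b)"
    using crucial_squares_square_lengths[OF assms(3)] by blast
  have card_S: "card (s ` A) = Suc m" using card_image[OF s_inj] assms(2) by simp
  then have "Max (s ` A) \<in> s ` A" using assms(1) by (intro Max_in) auto
  then obtain c where "Max (s ` A) = s c" "c \<in> A" by (rule imageE)
  then have "2 * Max (s ` A) + 1 \<le> length W" using ends_with_square_length[OF s] by simp
  with assms(4) have "Max (s ` A) \<le> 2 ^ m - 1" by simp
  with assms(1) card_S s_doubling have "s ` A = (\<lambda>k. 2 ^ k - 1) ` {..m}"
    by (intro doubling_eq_image_Mersenne) auto
  with s_inj s show ?thesis using that by blast
qed

lemma crucial_squares_eq_zimin:
  assumes "finite A" "card A = Suc m" "crucial A (squares A) W" "length W \<le> 2 ^ Suc m - 1"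
  shows "\<exists>\<sigma>. bij_betw \<sigma> {1..Suc m} A \<and> W = zimin \<sigma> (Suc m)"
proof -
  obtain s where s_inj: "inj_on s A" and S: "s ` A = (\<lambda>k. 2 ^ k - 1) ` {..m}"
    and s: "\<And>b. b \<in> A \<Longrightarrow> ends_with_square W b (s b)"
    using crucial_squares_square_lengths_Mersenne[OF assms] by blast
  define \<sigma> where "\<sigma> j = inv_into A s (2 ^ (j - 1) - 1)" for j
  have \<sigma>: "\<sigma> (Suc j) \<in> A" "s (\<sigma> (Suc j)) = 2 ^ j - 1" if "j \<le> m" for j
  proof -
    have "2 ^ j - 1 \<in> s ` A" using S that by auto
    then show "\<sigma> (Suc j) \<in> A" "s (\<sigma> (Suc j)) = 2 ^ j - 1"
      by (simp_all add: \<sigma>_def inv_into_into f_inv_into_f)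
  qed
  have "suffix (zimin \<sigma> (Suc m)) W"
    using \<sigma> s by (intro suffix_zimin_if_ends_with_squares) (metis less_Suc_eq_le)
  then obtain zs where "W = zs @ zimin \<sigma> (Suc m)" unfolding suffix_def by blast
  moreover have "length W \<le> length (zimin \<sigma> (Suc m))"
    using assms(4) by (simp only: length_zimin)
  ultimately have "zs = []" by simp
  with \<open>W = zs @ zimin \<sigma> (Suc m)\<close> have W: "W = zimin \<sigma> (Suc m)" by simp
  have "\<sigma> ` {1..Suc m} = A"
  proof
    show "\<sigma> ` {1..Suc m} \<subseteq> A" using \<sigma>(1) by (auto simp: Suc_le_eq gr0_conv_Suc)
    show "A \<subseteq> \<sigma> ` {1..Suc m}"
    proof
      fix b assume "b \<in> A"
      then obtain k where "k \<le> m" "s b = 2 ^ k - 1" using S by blast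
      then have "b = \<sigma> (Suc k)" using inv_into_f_f[OF s_inj \<open>b \<in> A\<close>] by (simp add: \<sigma>_def)
      with \<open>k \<le> m\<close> show "b \<in> \<sigma> ` {1..Suc m}" by auto
    qed
  qed
  then have "bij_betw \<sigma> {1..Suc m} A"
    using assms(2) by (simp add: bij_betw_def eq_card_imp_inj_on)
  with W show ?thesis by blast
qed

lemma zimin_rename:
  assumes "inj_on a {1..n}" "bij_betw \<sigma> {1..n} (a ` {1..n})"
  shows "\<exists>\<tau>. bij_betw \<tau> (a ` {1..n}) (a ` {1..n}) \<and> zimin \<sigma> n = map \<tau> (zimin a n)"
proof
  let ?\<tau> = "\<sigma> \<circ> inv_into {1..n} a"
  have "bij_betw (inv_into {1..n} a) (a ` {1..n}) {1..n}"
    using assms(1) by (intro bij_betw_inv_into) (simp add: bij_betw_def)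
  then have "bij_betw ?\<tau> (a ` {1..n}) (a ` {1..n})"
    using assms(2) by (rule bij_betw_trans)
  moreover have "zimin \<sigma> n = map ?\<tau> (zimin a n)"
    unfolding map_zimin using assms(1) by (intro zimin_cong) simp
  ultimately show "bij_betw ?\<tau> (a ` {1..n}) (a ` {1..n}) \<and> zimin \<sigma> n = map ?\<tau> (zimin a n)" ..
qed

theorem mainTheorem2:
  fixes a :: "nat \<Rightarrow> 'a" and n :: nat and W :: "'a list"
  assumes "n \<ge> 1"
    and "inj_on a {1..n}"
    and "minimal_crucial (a ` {1..n}) (squares (a ` {1..n})) W"
  shows "\<exists>\<sigma>. bij_betw \<sigma> (a ` {1..n}) (a ` {1..n}) \<and> W = map \<sigma> (zimin a n)"
proof -
  let ?A = "a ` {1..n}"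
  obtain m where n: "n = Suc m" using assms(1) by (cases n) auto
  have "card ?A = n" using card_image[OF assms(2)] by simp
  have crucial: "crucial ?A (squares ?A) W"
    using assms(3) unfolding minimal_crucial_def by blast
  have "length W \<le> length (zimin a n)"
    using assms(3) crucial_zimin[OF assms(2)] unfolding minimal_crucial_def by blast
  then have "length W \<le> 2 ^ Suc m - 1" by (simp add: length_zimin n)
  with crucial \<open>card ?A = n\<close> obtain \<sigma> where "bij_betw \<sigma> {1..n} ?A" "W = zimin \<sigma> n"
    using crucial_squares_eq_zimin[of ?A m W] n by auto
  with zimin_rename[OF assms(2)] show ?thesis by metis
qed

end
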